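(* Among the $q^{TM}$ distinct assignments of the matrix $S\in\mathbb{F}(q)^{T\times M}$, at most a fraction $q^{-1}\binom{n}{k}TM$ of them induce a matrix $Q_A\cdot G$ of rank less than $M$ for some set $A\subset I_n$ with $|A|=n-k$. (Consequently, if $q>\binom{n}{k}TM$, there exists an assignment of $S$ for which $Q_A\cdot G$ has rank $M$ for every such $A$.)
   Context: Fix a balanced incomplete block design $(I_n,\mathcal{B})\in S_\lambda(2,r,n)$ (every element of $I_n=\{1,\dots,n\}$ lies in the same number of blocks, each block has $r$ elements, every pair of elements lies in exactly $\lambda$ blocks), with blocks $B_1,\dots,B_{N^*}$, where $N^*=\lambda n(n-1)/(r(r-1))$. For $A\subset I_n$ with $|A|=n-k$ define $T(A)=\sum_{B\in\mathcal{B}:|B\cap A|\ge 2}(|B\cap A|-1)$ and $T=\max_{A\subseteq I_n,|A|=n-k}T(A)$. Let $M=(r-1)N^*-T$. The $M$ information symbols form a vector $\vec d\in\mathbb{F}(q)^M$; with $S\in\mathbb{F}(q)^{T\times M}$ and $G=[I,S^t]^t$ (size $(r-1)N^*\times M$), the vector $G\vec d$ is written column-wise into an $(r-1)\times N^*$ matrix $D$. For each column $j$ a parity symbol $P_j=\sum_{i=1}^{r-1}D_{i,j}$ is formed, and the $r$ symbols $(D_{1,j},\dots,D_{r-1,j},P_j)$ (the $j$-th parity group) are stored one per disk on the disks of block $B_j$. Let $R=[I,\vec 1^t]^t$ be the $r\times(r-1)$ matrix consisting of the $(r-1)\times(r-1)$ identity with an all-ones row appended. For the set $A$ of inaccessible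 disks and each $j$: if $|B_j\cap A|\le 1$, let $R_j$ be $R$ with its last row set to zero; if $|B_j\cap A|\ge 2$, let $R_j$ be $R$ with only the rows corresponding to the symbols of parity group $j$ stored on disks in $B_j\setminus A$ kept and all other rows set to zero. Let $Q_A$ be the $(rN^* )\times(r-1)N^*$ block-diagonal matrix with diagonal blocks $R_1,\dots,R_{N^*}$. Then $Q_A G\vec d$ is the vector of information obtainable when disks in $A$ are inaccessible, so $\vec d$ is decodable iff $Q_A G$ has rank $M$. *)

theory Defs
  imports "Jordan_Normal_Form.DL_Rank"
begin

text \<open>A BIBD in S_lambda(2,r,n) on I_n = {1..n}; blocks B_1..B_N are the list entries
  Bs!0 .. Bs!(N-1) (repeated blocks allowed, each counted separately).\<close>
definition is_bibd :: "nat \<Rightarrow> nat \<Rightarrow> nat \<Rightarrow> nat set list \<Rightarrow> bool" where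
  "is_bibd lam r n Bs \<longleftrightarrow>
     (\<forall>B\<in>set Bs. B \<subseteq> {1..n} \<and> card B = r) \<and>
     (\<exists>c. \<forall>x\<in>{1..n}. card {j. j < length Bs \<and> x \<in> Bs!j} = c) \<and>
     (\<forall>x\<in>{1..n}. \<forall>y\<in>{1..n}. x \<noteq> y \<longrightarrow>
         card {j. j < length Bs \<and> x \<in> Bs!j \<and> y \<in> Bs!j} = lam)"

definition T_of :: "nat set list \<Rightarrow> nat set \<Rightarrow> nat" where
  "T_of Bs A = (\<Sum>j<length Bs. if card (Bs!j \<inter> A) \<ge> 2 then card (Bs!j \<inter> A) - 1 else 0)"

definition T_max :: "nat \<Rightarrow> nat \<Rightarrow> nat set list \<Rightarrow> nat" where
  "T_max n k Bs = Max {T_of Bs A | A. A \<subseteq> {1..n} \<and> card A = n - k}"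

text \<open>G = [I, S^t]^t of size L x M, where L = (r-1)N and S is T x M (T = L - M).\<close>
definition gen_mat :: "nat \<Rightarrow> nat \<Rightarrow> 'a::field mat \<Rightarrow> 'a mat" where
  "gen_mat L M S = mat L M (\<lambda>(i,j). if i < M then (if i = j then 1 else 0) else S $$ (i - M, j))"

text \<open>R = [I, 1^t]^t, r x (r-1).  Row a < r-1 corresponds to data symbol D_{a+1,j},
  row r-1 to the parity symbol P_j.\<close>
definition R_mat :: "nat \<Rightarrow> 'a::field mat" where
  "R_mat r = mat r (r - 1) (\<lambda>(a,b). if a < r - 1 then (if a = b then 1 else 0) else 1)"

text \<open>Placement: pl j a is the disk (an element of B_j) storing symbol a of parity group j.\<close>
definition R_j :: "nat \<Rightarrow> nat set list \<Rightarrow> (nat \<Rightarrow> nat \<Rightarrow> nat) \<Rightarrow> nat set \<Rightarrow> nat \<Rightarrow> 'a::field mat" where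
  "R_j r Bs pl A j = mat r (r - 1) (\<lambda>(a,b).
     if (if card (Bs!j \<inter> A) \<le> 1 then a < r - 1 else pl j a \<notin> A)
     then R_mat r $$ (a,b) else 0)"

text \<open>Q_A: block diagonal with blocks R_1..R_N, size rN x (r-1)N.  Symbol a of group j
  (i.e. D_{a+1,j}) sits at position j*(r-1)+a of G d (column-wise filling of D).\<close>
definition Q_mat :: "nat \<Rightarrow> nat set list \<Rightarrow> (nat \<Rightarrow> nat \<Rightarrow> nat) \<Rightarrow> nat set \<Rightarrow> 'a::field mat" where
  "Q_mat r Bs pl A = mat (r * length Bs) ((r - 1) * length Bs) (\<lambda>(i,c).
     if i div r = c div (r - 1) then R_j r Bs pl A (i div r) $$ (i mod r, c mod (r - 1)) else 0)"

end

theory Submission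
  imports Defs Berlekamp_Zassenhaus.Berlekamp_Type_Based
begin

text \<open>If \<open>Q_A G\<close> has rank less than \<open>M\<close>, some \<open>x \<noteq> 0\<close> with a coordinate \<open>x_i = 1\<close> satisfies
  \<open>Q_A G x = 0\<close>, so \<open>v = G x\<close> lies in the kernel of \<open>Q_A\<close> and has \<open>v_i = 1\<close>. As the top block of
  \<open>G\<close> is the identity, \<open>v\<close> fixes every column of \<open>S\<close> but the \<open>i\<close>-th, leaving at most
  \<open>q^(T(M-1))\<close> matrices \<open>S\<close>. A kernel vector of \<open>Q_A\<close> is determined by its data symbols that
  cannot be read back: in each parity group these are the erased data symbols, save one that a
  surviving parity recovers, at most \<open>T(A) \<le> T\<close> in all. So the kernel has at most \<open>q^T\<close>
  elements, at most \<open>q^(T-1)\<close> of them with \<open>v_i = 1\<close>, and at most \<open>M q^(TM) / q\<close> matrices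
  \<open>S\<close> are bad for \<open>A\<close>. A union bound over the \<open>n choose k\<close> sets \<open>A\<close> finishes the proof.\<close>

section \<open>Counting matrices and kernels over a finite field\<close>

lemma two_le_card_field: "2 \<le> CARD('a::{finite,field})"
proof -
  have "card {0::'a, 1} \<le> CARD('a)" by (rule card_mono) auto
  then show ?thesis by simp
qed

lemma card_le_power_if_determined:
  fixes get :: "'b \<Rightarrow> 'i \<Rightarrow> 'a::finite"
  assumes F: "finite F"
    and determined: "\<And>x y. x \<in> K \<Longrightarrow> y \<in> K \<Longrightarrow> (\<forall>i\<in>F. get x i = get y i) \<Longrightarrow> x = y"
  shows "card K \<le> CARD('a) ^ card F"
proof -
  have "card K \<le> card (PiE F (\<lambda>_. UNIV :: 'a set))"
  proof (rule card_inj_on_le)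
    show "inj_on (\<lambda>x. restrict (get x) F) K"
    proof (rule inj_onI)
      fix x y assume "x \<in> K" "y \<in> K" and eq: "restrict (get x) F = restrict (get y) F"
      have "get x i = get y i" if "i \<in> F" for i
        using fun_cong[OF eq, of i] that by simp
      with \<open>x \<in> K\<close> \<open>y \<in> K\<close> show "x = y" by (intro determined) auto
    qed
  qed (use F in \<open>auto simp: finite_PiE\<close>)
  then show ?thesis using F by (simp add: card_PiE)
qed

lemma card_carrier_mat: "card (carrier_mat nr nc :: 'a::finite mat set) = CARD('a) ^ (nr * nc)"
proof -
  let ?D = "{..<nr} \<times> {..<nc}"
  let ?P = "PiE ?D (\<lambda>_. UNIV :: 'a set)"
  have image: "carrier_mat nr nc = (\<lambda>f. mat nr nc f) ` ?P"
  proof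
    show "carrier_mat nr nc \<subseteq> (\<lambda>f. mat nr nc f) ` ?P"
    proof
      fix S :: "'a mat" assume S: "S \<in> carrier_mat nr nc"
      have "S = mat nr nc (restrict (\<lambda>p. S $$ p) ?D)"
        using S by (intro eq_matI) auto
      moreover have "restrict (\<lambda>p. S $$ p) ?D \<in> ?P" by auto
      ultimately show "S \<in> (\<lambda>f. mat nr nc f) ` ?P" by blast
    qed
  qed auto
  have inj: "inj_on (\<lambda>f. mat nr nc f :: 'a mat) ?P"
  proof (rule inj_onI)
    fix f g assume f: "f \<in> ?P" and g: "g \<in> ?P" and fg: "mat nr nc f = (mat nr nc g :: 'a mat)"
    show "f = g"
    proof (rule PiE_ext[OF f g])
      fix p assume "p \<in> ?D"
      then obtain i j where "p = (i,j)" "i < nr" "j < nc" by auto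
      then show "f p = g p" using arg_cong[OF fg, of "\<lambda>S. S $$ (i,j)"] by simp
    qed
  qed
  have "card ?P = CARD('a) ^ (nr * nc)" by (simp add: card_PiE card_cartesian_product)
  then show ?thesis unfolding image by (simp add: card_image[OF inj])
qed

lemma finite_carrier_mat [simp]: "finite (carrier_mat nr nc :: 'a::finite mat set)"
  by (rule card_ge_0_finite) (simp add: card_carrier_mat)

lemma exists_carrier_mat_not_in:
  fixes X :: "'a::finite mat set"
  assumes count: "CARD('a) * card X \<le> b * CARD('a) ^ (T * M)" and b: "b < CARD('a)"
    and X: "X \<subseteq> carrier_mat T M"
  obtains S where "S \<in> carrier_mat T M" "S \<notin> X"
proof -
  have "b * CARD('a) ^ (T * M) < CARD('a) * CARD('a) ^ (T * M)" using b by simp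
  with count have "CARD('a) * card X < CARD('a) * CARD('a) ^ (T * M)" by (rule le_less_trans)
  then have "card X < card (carrier_mat T M :: 'a mat set)"
    unfolding card_carrier_mat by simp
  moreover have "finite X" using X by (rule finite_subset) simp
  ultimately have "\<not> carrier_mat T M \<subseteq> X" using card_mono[of X "carrier_mat T M"] by linarith
  then show thesis using that by blast
qed

lemma finite_mat_kernel [simp]: "finite (mat_kernel (Q :: 'a::{finite,comm_ring_1} mat))"
  by (rule finite_subset[of _ "carrier_vec (dim_col Q)"]) (auto simp: mat_kernel_def)

lemma sum_eq_imp_eq_at:
  fixes f g :: "'b \<Rightarrow> 'a::ab_group_add"
  assumes "finite X" "b \<in> X" "sum f X = sum g X" "\<And>x. x \<in> X - {b} \<Longrightarrow> f x = g x"
  shows "f b = g b"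
proof -
  have "f b + sum f (X - {b}) = g b + sum g (X - {b})"
    using assms(1-3) by (simp add: sum.remove)
  moreover have "sum f (X - {b}) = sum g (X - {b})" using assms(4) by (rule sum.cong[OF refl])
  ultimately show ?thesis by simp
qed

lemma rank_lt_imp_nonzero_kernel_vec:
  fixes A :: "'a::field mat"
  assumes A: "A \<in> carrier_mat nr nc" and rk: "vec_space.rank nr A < nc"
  obtains v where "v \<in> mat_kernel A" "v \<noteq> 0\<^sub>v nc"
proof (cases "distinct (cols A)")
  case True
  interpret vec_space "TYPE('a)" nr .
  have "\<not> lin_indpt (set (cols A))"
    using lin_indpt_full_rank[OF A True] rk by auto
  then obtain v where "v \<in> carrier_vec nc" "v \<noteq> 0\<^sub>v nc" "A *\<^sub>v v = 0\<^sub>v nr"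
    using lin_depE[OF A _ True] by blast
  then show ?thesis using that mat_kernelI[OF A] by blast
next
  case False
  then obtain i j where ij: "i < nc" "j < nc" "i \<noteq> j" "col A i = col A j"
    using A by (metis distinct_conv_nth cols_length cols_nth carrier_matD(2))
  define v :: "'a vec" where "v = vec nc (\<lambda>l. if l = i then 1 else if l = j then -1 else 0)"
  have "A *\<^sub>v v = 0\<^sub>v nr"
  proof (rule eq_vecI)
    fix k assume "k < dim_vec (0\<^sub>v nr :: 'a vec)"
    then have k: "k < nr" by simp
    have "(A *\<^sub>v v) $ k = (\<Sum>l<nc. A $$ (k,l) * v $ l)"
      using A k by (simp add: mult_mat_vec_def scalar_prod_def v_def lessThan_atLeast0)
    also have "\<dots> = (\<Sum>l\<in>{i,j}. A $$ (k,l) * v $ l)"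
      by (rule sum.mono_neutral_right) (use ij in \<open>auto simp: v_def\<close>)
    also have "\<dots> = A $$ (k,i) - A $$ (k,j)" using ij by (simp add: v_def)
    also have "\<dots> = 0" using arg_cong[OF ij(4), of "\<lambda>c. c $ k"] ij A k by (simp add: col_def)
    finally show "(A *\<^sub>v v) $ k = 0\<^sub>v nr $ k" using k by simp
  qed (use A in auto)
  then have "v \<in> mat_kernel A" using A by (intro mat_kernelI) (auto simp: v_def)
  moreover have "v \<noteq> 0\<^sub>v nc"
  proof
    assume "v = 0\<^sub>v nc"
    then have "v $ i = 0" using ij by simp
    then show False using ij by (simp add: v_def)
  qed
  ultimately show ?thesis by (rule that)
qed

section \<open>Systematic generator matrices\<close>

lemma gen_mat_carrier [simp]: "gen_mat L M S \<in> carrier_mat L M"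
  by (simp add: gen_mat_def)

lemma gen_mat_mult_vec_top:
  assumes "y \<in> carrier_vec M" "j < M" "M \<le> L"
  shows "(gen_mat L M S *\<^sub>v y) $ j = y $ j"
proof -
  have "(gen_mat L M S *\<^sub>v y) $ j = (\<Sum>l<M. (if j = l then 1 else 0) * y $ l)"
    using assms by (simp add: mult_mat_vec_def scalar_prod_def gen_mat_def lessThan_atLeast0)
  also have "\<dots> = (\<Sum>l<M. if l = j then y $ l else 0)" by (intro sum.cong) auto
  also have "\<dots> = y $ j" using assms(2) by simp
  finally show ?thesis .
qed

lemma gen_mat_mult_vec_bottom:
  assumes "y \<in> carrier_vec M" "t < T"
  shows "(gen_mat (M + T) M S *\<^sub>v y) $ (M + t) = (\<Sum>l<M. S $$ (t, l) * y $ l)"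
  using assms by (simp add: mult_mat_vec_def scalar_prod_def gen_mat_def lessThan_atLeast0)

text \<open>Since \<open>gen_mat (M + T) M S\<close> has an identity block on top, a vector lies in its
  column space iff it is the image of its own first \<open>M\<close> coordinates.\<close>
definition systematic_codes_containing :: "nat \<Rightarrow> nat \<Rightarrow> 'a::field vec \<Rightarrow> 'a mat set" where
  "systematic_codes_containing T M v =
     {S \<in> carrier_mat T M. gen_mat (M + T) M S *\<^sub>v vec M (($) v) = v}"

lemma card_systematic_codes_containing:
  fixes v :: "'a::{finite,field} vec"
  assumes i: "i < M" and vi: "v $ i = 1"
  shows "card (systematic_codes_containing T M v) \<le> CARD('a) ^ (T * (M - 1))"
proof -
  let ?F = "{..<T} \<times> ({..<M} - {i})"
  let ?x = "vec M (($) v) :: 'a vec"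
  have row: "v $ (M + t) = (\<Sum>l<M. S $$ (t, l) * ?x $ l)"
    if "S \<in> systematic_codes_containing T M v" "t < T" for S t
    using that gen_mat_mult_vec_bottom[of ?x M t T S]
    by (simp add: systematic_codes_containing_def)
  have "card (systematic_codes_containing T M v) \<le> CARD('a) ^ card ?F"
  proof (rule card_le_power_if_determined[where get = "($$)"])
    fix S S' assume S: "S \<in> systematic_codes_containing T M v"
      and S': "S' \<in> systematic_codes_containing T M v" and agree: "\<forall>p\<in>?F. S $$ p = S' $$ p"
    have "S $$ (t, i) = S' $$ (t, i)" if t: "t < T" for t
    proof -
      have "S $$ (t, i) * ?x $ i = S' $$ (t, i) * ?x $ i"
      proof (rule sum_eq_imp_eq_at[of "{..<M}"])
        show "(\<Sum>l<M. S $$ (t, l) * ?x $ l) = (\<Sum>l<M. S' $$ (t, l) * ?x $ l)"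
          using row[OF S t] row[OF S' t] by simp
        show "S $$ (t, l) * ?x $ l = S' $$ (t, l) * ?x $ l" if "l \<in> {..<M} - {i}" for l
          using agree t that by simp
      qed (use i in simp_all)
      then show ?thesis using i vi by simp
    qed
    with S S' agree show "S = S'"
      by (intro eq_matI) (auto simp: systematic_codes_containing_def)
  qed simp
  then show ?thesis using i by (simp add: card_cartesian_product)
qed

lemma card_kernel_coord_eq_1:
  fixes Q :: "'a::{finite,field} mat"
  assumes Q: "Q \<in> carrier_mat m n" and i: "i < n"
  shows "CARD('a) * card {v \<in> mat_kernel Q. v $ i = 1} \<le> card (mat_kernel Q)"
proof (cases "{v \<in> mat_kernel Q. v $ i = 1} = {}")
  case True
  then show ?thesis unfolding True by simp
next
  case False
  then obtain v0 where v0: "v0 \<in> mat_kernel Q" "v0 $ i = 1" by blast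
  have v0c: "v0 \<in> carrier_vec n" using mat_kernelD[OF Q v0(1)] by simp
  \<comment> \<open>\<open>shift (a, -)\<close> maps this slice injectively into the slice \<open>v $ i = a\<close>.\<close>
  define shift where "shift p = (snd p - v0) + fst p \<cdot>\<^sub>v v0" for p :: "'a \<times> 'a vec"
  have "card ((UNIV :: 'a set) \<times> {v \<in> mat_kernel Q. v $ i = 1}) \<le> card (mat_kernel Q)"
  proof (rule card_inj_on_le)
    show "inj_on shift (UNIV \<times> {v \<in> mat_kernel Q. v $ i = 1})"
    proof (rule inj_onI, clarify)
      fix a v a' v' assume v: "v \<in> mat_kernel Q" "v $ i = 1" and v': "v' \<in> mat_kernel Q" "v' $ i = 1"
        and eq: "shift (a, v) = shift (a', v')"
      have vc: "v \<in> carrier_vec n" "v' \<in> carrier_vec n"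
        using mat_kernelD[OF Q v(1)] mat_kernelD[OF Q v'(1)] by auto
      have coord: "v $ c - v0 $ c + a * v0 $ c = v' $ c - v0 $ c + a' * v0 $ c" if "c < n" for c
        using arg_cong[OF eq, of "\<lambda>u. u $ c"] that vc v0c by (simp add: shift_def)
      have "a = a'" using coord[OF i] v v' v0 by simp
      moreover have "v = v'"
        using vc coord \<open>a = a'\<close> by (intro eq_vecI) auto
      ultimately show "a = a' \<and> v = v'" ..
    qed
    show "shift ` (UNIV \<times> {v \<in> mat_kernel Q. v $ i = 1}) \<subseteq> mat_kernel Q"
    proof clarify
      fix a v assume v: "v \<in> mat_kernel Q"
      have vc: "v \<in> carrier_vec n" and "Q *\<^sub>v v = 0\<^sub>v m" using mat_kernelD[OF Q v] by auto
      moreover have "Q *\<^sub>v v0 = 0\<^sub>v m" using mat_kernelD[OF Q v0(1)] by auto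
      ultimately have "Q *\<^sub>v shift (a, v) = 0\<^sub>v m"
        using Q v0c
        by (simp add: shift_def mult_add_distrib_mat_vec mult_minus_distrib_mat_vec mult_mat_vec)
          (rule eq_vecI, auto)
      then show "shift (a, v) \<in> mat_kernel Q"
        using Q vc v0c by (intro mat_kernelI[OF Q]) (auto simp: shift_def)
    qed
  qed simp
  then show ?thesis by (simp add: card_cartesian_product)
qed

lemma low_rank_imp_kernel_codeword:
  fixes Q :: "'a::field mat"
  assumes Q: "Q \<in> carrier_mat m (M + T)" and S: "S \<in> carrier_mat T M"
    and rk: "vec_space.rank m (Q * gen_mat (M + T) M S) < M"
  obtains i v where "i < M" "v \<in> mat_kernel Q" "v $ i = 1"
    "S \<in> systematic_codes_containing T M v"
proof -
  let ?G = "gen_mat (M + T) M S"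
  have QG: "Q * ?G \<in> carrier_mat m M" using Q by simp
  obtain x where x: "x \<in> mat_kernel (Q * ?G)" "x \<noteq> 0\<^sub>v M"
    using rank_lt_imp_nonzero_kernel_vec[OF QG rk] .
  have xc: "x \<in> carrier_vec M" and Qx: "(Q * ?G) *\<^sub>v x = 0\<^sub>v m"
    using mat_kernelD[OF QG x(1)] by auto
  obtain i where i: "i < M" "x $ i \<noteq> 0"
    using x(2) xc by (metis eq_vecI carrier_vecD index_zero_vec)
  define y where "y = (1 / x $ i) \<cdot>\<^sub>v x"
  define v where "v = ?G *\<^sub>v y"
  have yc: "y \<in> carrier_vec M" using xc by (simp add: y_def)
  have top: "v $ j = y $ j" if "j < M" for j
    using gen_mat_mult_vec_top[OF yc that] by (simp add: v_def)
  have "Q *\<^sub>v v = (Q * ?G) *\<^sub>v y"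
    unfolding v_def by (rule assoc_mult_mat_vec[symmetric, OF Q gen_mat_carrier yc])
  also have "\<dots> = (1 / x $ i) \<cdot>\<^sub>v ((Q * ?G) *\<^sub>v x)"
    unfolding y_def by (rule mult_mat_vec[OF QG xc])
  also have "\<dots> = 0\<^sub>v m" using Qx by (intro eq_vecI) auto
  finally have "Q *\<^sub>v v = 0\<^sub>v m" .
  moreover have "v \<in> carrier_vec (M + T)"
    unfolding v_def by (rule mult_mat_vec_carrier[OF gen_mat_carrier yc])
  ultimately have "v \<in> mat_kernel Q" by (intro mat_kernelI[OF Q])
  moreover have "v $ i = 1" using top i xc by (simp add: y_def)
  moreover have "vec M (($) v) = y" using top yc by (intro eq_vecI) auto
  then have "S \<in> systematic_codes_containing T M v"
    using S by (simp add: systematic_codes_containing_def v_def)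
  ultimately show thesis using i(1) that by blast
qed

lemma card_kernel_ge_if_low_rank:
  fixes Q :: "'a::{finite,field} mat"
  assumes Q: "Q \<in> carrier_mat m (M + T)" and S: "S \<in> carrier_mat T M"
    and rk: "vec_space.rank m (Q * gen_mat (M + T) M S) < M"
  shows "CARD('a) \<le> card (mat_kernel Q)"
proof -
  obtain i v where i: "i < M" and v: "v \<in> mat_kernel Q" "v $ i = 1"
    using low_rank_imp_kernel_codeword[OF Q S rk] .
  then have "1 \<le> card {v \<in> mat_kernel Q. v $ i = 1}"
    by (simp add: Suc_le_eq card_gt_0_iff) blast
  then have "CARD('a) * 1 \<le> CARD('a) * card {v \<in> mat_kernel Q. v $ i = 1}"
    by (rule mult_le_mono2)
  also have "\<dots> \<le> card (mat_kernel Q)" using i by (intro card_kernel_coord_eq_1[OF Q]) simp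
  finally show ?thesis by simp
qed

lemma card_low_rank_systematic:
  fixes Q :: "'a::{finite,field} mat"
  assumes Q: "Q \<in> carrier_mat m (M + T)" and kernel: "card (mat_kernel Q) \<le> CARD('a) ^ T"
  shows "CARD('a) * card {S \<in> carrier_mat T M. vec_space.rank m (Q * gen_mat (M + T) M S) < M}
         \<le> M * CARD('a) ^ (T * M)"
proof -
  let ?q = "CARD('a)"
  let ?slice = "\<lambda>i. {v \<in> mat_kernel Q. v $ i = 1}"
  let ?bad = "{S \<in> carrier_mat T M. vec_space.rank m (Q * gen_mat (M + T) M S) < M}"
  let ?codes = "\<lambda>i. \<Union>v\<in>?slice i. systematic_codes_containing T M v"
  have "finite (\<Union>i<M. ?codes i)"
    by (rule finite_subset[OF _ finite_carrier_mat[of T M]])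
      (auto simp: systematic_codes_containing_def)
  moreover have "?bad \<subseteq> (\<Union>i<M. ?codes i)"
    by (auto elim!: low_rank_imp_kernel_codeword[OF Q])
  ultimately have "card ?bad \<le> card (\<Union>i<M. ?codes i)" by (rule card_mono)
  also have "\<dots> \<le> (\<Sum>i<M. card (?codes i))" by (rule card_UN_le) simp
  also have "\<dots> \<le> (\<Sum>i<M. card (?slice i) * ?q ^ (T * (M - 1)))"
  proof (rule sum_mono)
    fix i assume "i \<in> {..<M}"
    then have "card (systematic_codes_containing T M v) \<le> ?q ^ (T * (M - 1))"
      if "v \<in> ?slice i" for v
      using that card_systematic_codes_containing by auto
    then have "(\<Sum>v\<in>?slice i. card (systematic_codes_containing T M v))
        \<le> card (?slice i) * ?q ^ (T * (M - 1))"
      using sum_bounded_above[of "?slice i" "\<lambda>v. card (systematic_codes_containing T M v)"]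
      by simp
    moreover have "card (?codes i) \<le> (\<Sum>v\<in>?slice i. card (systematic_codes_containing T M v))"
      by (rule card_UN_le) simp
    ultimately show "card (?codes i) \<le> card (?slice i) * ?q ^ (T * (M - 1))" by linarith
  qed
  finally have "?q * card ?bad \<le> ?q * (\<Sum>i<M. card (?slice i) * ?q ^ (T * (M - 1)))"
    by (rule mult_le_mono2)
  also have "\<dots> = (\<Sum>i<M. ?q * card (?slice i)) * ?q ^ (T * (M - 1))"
    by (simp add: sum_distrib_left sum_distrib_right mult.assoc)
  also have "\<dots> \<le> (\<Sum>i<M. ?q ^ T) * ?q ^ (T * (M - 1))"
  proof (intro mult_right_mono sum_mono)
    fix i assume "i \<in> {..<M}"
    then have "?q * card (?slice i) \<le> card (mat_kernel Q)"
      by (intro card_kernel_coord_eq_1[OF Q]) simp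
    then show "?q * card (?slice i) \<le> ?q ^ T" using kernel by linarith
  qed simp
  also have "\<dots> = M * ?q ^ (T * M)"
    by (cases M) (simp_all add: power_add[symmetric] algebra_simps)
  finally show ?thesis .
qed

section \<open>Reading the stripes back with the disks of \<open>A\<close> inaccessible\<close>

lemma block_index_less:
  fixes j N b m :: nat
  assumes "j < N" "b < m"
  shows "j * m + b < m * N"
proof -
  have "j * m + b < (j + 1) * m" using assms(2) by simp
  also have "\<dots> \<le> N * m" using assms(1) by (intro mult_right_mono) auto
  finally show ?thesis by (simp add: mult.commute)
qed

lemma Q_mat_carrier [simp]:
  "Q_mat r Bs pl A \<in> carrier_mat (r * length Bs) ((r - 1) * length Bs)"
  by (simp add: Q_mat_def)

lemma Q_mat_mult_vec_nth:
  fixes v :: "'a::field vec"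
  assumes r: "2 \<le> r" and j: "j < length Bs" and a: "a < r"
    and v: "v \<in> carrier_vec ((r - 1) * length Bs)"
  shows "(Q_mat r Bs pl A *\<^sub>v v) $ (j * r + a)
       = (\<Sum>b<r - 1. R_j r Bs pl A j $$ (a, b) * v $ (j * (r - 1) + b))"
proof -
  let ?L = "(r - 1) * length Bs"
  let ?block = "(\<lambda>b. j * (r - 1) + b) ` {..<r - 1}"
  define f where "f c = Q_mat r Bs pl A $$ (j * r + a, c) * v $ c" for c
  have row: "j * r + a < r * length Bs" using block_index_less[OF j a] .
  have row_div: "(j * r + a) div r = j" "(j * r + a) mod r = a" using a by auto
  have "(Q_mat r Bs pl A *\<^sub>v v) $ (j * r + a) = (\<Sum>c<?L. f c)"
    using row v by (simp add: mult_mat_vec_def scalar_prod_def Q_mat_def f_def lessThan_atLeast0)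
  also have "\<dots> = (\<Sum>c\<in>?block. f c)"
  proof (rule sum.mono_neutral_right)
    show "?block \<subseteq> {..<?L}" using block_index_less[OF j] by auto
    show "\<forall>c\<in>{..<?L} - ?block. f c = 0"
    proof
      fix c assume c: "c \<in> {..<?L} - ?block"
      have "c = j * (r - 1) + c mod (r - 1)" if "c div (r - 1) = j"
        using that by (metis div_mult_mod_eq mult.commute)
      moreover have "c mod (r - 1) < r - 1" using r by simp
      ultimately have "c div (r - 1) \<noteq> j" using c by blast
      then show "f c = 0" using c row row_div by (simp add: f_def Q_mat_def)
    qed
  qed simp
  also have "\<dots> = (\<Sum>b<r - 1. f (j * (r - 1) + b))"
    by (rule sum.reindex[unfolded comp_def]) (auto simp: inj_on_def)
  also have "\<dots> = (\<Sum>b<r - 1. R_j r Bs pl A j $$ (a, b) * v $ (j * (r - 1) + b))"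
  proof (rule sum.cong[OF refl])
    fix b assume b: "b \<in> {..<r - 1}"
    then have "(j * (r - 1) + b) div (r - 1) = j" "(j * (r - 1) + b) mod (r - 1) = b" by auto
    then show "f (j * (r - 1) + b) = R_j r Bs pl A j $$ (a, b) * v $ (j * (r - 1) + b)"
      using block_index_less[OF j] b row row_div by (simp add: f_def Q_mat_def)
  qed
  finally show ?thesis .
qed

lemma Q_mat_mult_vec_nth_data:
  fixes v :: "'a::field vec"
  assumes r: "2 \<le> r" and j: "j < length Bs" and a: "a < r - 1"
    and v: "v \<in> carrier_vec ((r - 1) * length Bs)"
    and kept: "card (Bs!j \<inter> A) \<le> 1 \<or> pl j a \<notin> A"
  shows "(Q_mat r Bs pl A *\<^sub>v v) $ (j * r + a) = v $ (j * (r - 1) + a)"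
proof -
  have "(Q_mat r Bs pl A *\<^sub>v v) $ (j * r + a)
      = (\<Sum>b<r - 1. R_j r Bs pl A j $$ (a, b) * v $ (j * (r - 1) + b))"
    using Q_mat_mult_vec_nth[OF r j _ v] a by simp
  also have "\<dots> = (\<Sum>b<r - 1. if b = a then v $ (j * (r - 1) + b) else 0)"
    using a kept by (intro sum.cong) (auto simp: R_j_def R_mat_def)
  finally show ?thesis using a by simp
qed

lemma Q_mat_mult_vec_nth_parity:
  fixes v :: "'a::field vec"
  assumes r: "2 \<le> r" and j: "j < length Bs"
    and v: "v \<in> carrier_vec ((r - 1) * length Bs)"
    and kept: "2 \<le> card (Bs!j \<inter> A)" "pl j (r - 1) \<notin> A"
  shows "(Q_mat r Bs pl A *\<^sub>v v) $ (j * r + (r - 1)) = (\<Sum>b<r - 1. v $ (j * (r - 1) + b))"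
proof -
  have "(Q_mat r Bs pl A *\<^sub>v v) $ (j * r + (r - 1))
      = (\<Sum>b<r - 1. R_j r Bs pl A j $$ (r - 1, b) * v $ (j * (r - 1) + b))"
    using Q_mat_mult_vec_nth[OF r j _ v, of "r - 1"] r by simp
  also have "\<dots> = (\<Sum>b<r - 1. v $ (j * (r - 1) + b))"
    using r kept by (intro sum.cong) (auto simp: R_j_def R_mat_def)
  finally show ?thesis .
qed

definition erased_data :: "nat \<Rightarrow> (nat \<Rightarrow> nat \<Rightarrow> nat) \<Rightarrow> nat set \<Rightarrow> nat \<Rightarrow> nat set" where
  "erased_data r pl A j = {a. a < r - 1 \<and> pl j a \<in> A}"

text \<open>The data positions of group \<open>j\<close> that \<open>Q_A v\<close> does not reveal: when the parity survives,
  one erased data symbol (we take the largest) is recovered from it.\<close>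
definition unrecoverable_in_group ::
    "nat \<Rightarrow> nat set list \<Rightarrow> (nat \<Rightarrow> nat \<Rightarrow> nat) \<Rightarrow> nat set \<Rightarrow> nat \<Rightarrow> nat set" where
  "unrecoverable_in_group r Bs pl A j =
     (if card (Bs!j \<inter> A) \<le> 1 then {}
      else if pl j (r - 1) \<in> A then erased_data r pl A j
      else erased_data r pl A j - {Max (erased_data r pl A j)})"

definition unrecoverable :: "nat \<Rightarrow> nat set list \<Rightarrow> (nat \<Rightarrow> nat \<Rightarrow> nat) \<Rightarrow> nat set \<Rightarrow> nat set" where
  "unrecoverable r Bs pl A =
     (\<Union>j<length Bs. (\<lambda>b. j * (r - 1) + b) ` unrecoverable_in_group r Bs pl A j)"

lemma unrecoverable_in_group_subset: "unrecoverable_in_group r Bs pl A j \<subseteq> {..<r - 1}"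
  by (auto simp: unrecoverable_in_group_def erased_data_def)

lemma finite_unrecoverable: "finite (unrecoverable r Bs pl A)"
  unfolding unrecoverable_def
  using finite_subset[OF unrecoverable_in_group_subset] by blast

lemma Q_mat_mult_vec_determined:
  fixes v w :: "'a::field vec"
  assumes r: "2 \<le> r"
    and v: "v \<in> carrier_vec ((r - 1) * length Bs)" and w: "w \<in> carrier_vec ((r - 1) * length Bs)"
    and Q_eq: "Q_mat r Bs pl A *\<^sub>v v = Q_mat r Bs pl A *\<^sub>v w"
    and agree: "\<forall>i\<in>unrecoverable r Bs pl A. v $ i = w $ i"
  shows "v = w"
proof (rule eq_vecI)
  fix c assume "c < dim_vec w"
  then have c: "c < (r - 1) * length Bs" using w by simp
  define j where "j = c div (r - 1)"
  define b where "b = c mod (r - 1)"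
  have c_eq: "c = j * (r - 1) + b" unfolding j_def b_def by (metis div_mult_mod_eq)
  have j: "j < length Bs" unfolding j_def using c r by (simp add: div_less_iff_less_mult mult.commute)
  have b: "b < r - 1" unfolding b_def using r by simp
  have data: "v $ (j * (r - 1) + b') = w $ (j * (r - 1) + b')"
    if "b' < r - 1" "card (Bs!j \<inter> A) \<le> 1 \<or> pl j b' \<notin> A" for b'
    using Q_mat_mult_vec_nth_data[where pl = pl and A = A, OF r j that(1) v that(2)]
      Q_mat_mult_vec_nth_data[where pl = pl and A = A, OF r j that(1) w that(2)] Q_eq by simp
  have lost: "v $ (j * (r - 1) + b') = w $ (j * (r - 1) + b')"
    if "b' \<in> unrecoverable_in_group r Bs pl A j" for b'
    using agree that j unfolding unrecoverable_def by blast
  show "v $ c = w $ c"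
  proof (cases "b \<in> unrecoverable_in_group r Bs pl A j \<or> card (Bs!j \<inter> A) \<le> 1 \<or> pl j b \<notin> A")
    case True
    then show ?thesis using data lost b c_eq by auto
  next
    case False
    then have many: "2 \<le> card (Bs!j \<inter> A)" and parity: "pl j (r - 1) \<notin> A"
      and b_max: "b = Max (erased_data r pl A j)"
      using b by (auto simp: unrecoverable_in_group_def erased_data_def split: if_splits)
    have "v $ (j * (r - 1) + b) = w $ (j * (r - 1) + b)"
    proof (rule sum_eq_imp_eq_at[of "{..<r - 1}" b "\<lambda>b'. v $ (j * (r - 1) + b')"])
      show "(\<Sum>b'<r - 1. v $ (j * (r - 1) + b')) = (\<Sum>b'<r - 1. w $ (j * (r - 1) + b'))"
        using Q_mat_mult_vec_nth_parity[where pl = pl, OF r j v many parity]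
          Q_mat_mult_vec_nth_parity[where pl = pl, OF r j w many parity] Q_eq by simp
      fix b' assume b': "b' \<in> {..<r - 1} - {b}"
      show "v $ (j * (r - 1) + b') = w $ (j * (r - 1) + b')"
      proof (cases "pl j b' \<in> A")
        case True
        then have "b' \<in> unrecoverable_in_group r Bs pl A j"
          using b' many parity b_max by (auto simp: unrecoverable_in_group_def erased_data_def)
        then show ?thesis by (rule lost)
      next
        case False
        then show ?thesis using b' by (intro data) auto
      qed
    qed (use b in simp_all)
    then show ?thesis using c_eq by simp
  qed
qed (use v w in simp)

lemma card_unrecoverable_in_group:
  assumes bij: "bij_betw (pl j) {..<r} (Bs!j)" and r: "2 \<le> r"
  shows "card (unrecoverable_in_group r Bs pl A j)
         \<le> (if 2 \<le> card (Bs!j \<inter> A) then card (Bs!j \<inter> A) - 1 else 0)"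
proof -
  let ?E = "erased_data r pl A j"
  have "Bs!j \<inter> A = pl j ` {a. a < r \<and> pl j a \<in> A}"
    using bij by (auto simp: bij_betw_def)
  moreover have "inj_on (pl j) {a. a < r \<and> pl j a \<in> A}"
    using bij by (auto simp: bij_betw_def inj_on_def)
  moreover have "{a. a < r \<and> pl j a \<in> A} = ?E \<union> (if pl j (r - 1) \<in> A then {r - 1} else {})"
  proof (rule Set.set_eqI)
    fix x
    show "x \<in> {a. a < r \<and> pl j a \<in> A} \<longleftrightarrow> x \<in> ?E \<union> (if pl j (r - 1) \<in> A then {r - 1} else {})"
      using r by (cases "x = r - 1") (auto simp: erased_data_def)
  qed
  moreover have "finite ?E" by (simp add: erased_data_def)
  ultimately have erased: "card (Bs!j \<inter> A) = card ?E + (if pl j (r - 1) \<in> A then 1 else 0)"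
    by (simp add: card_image erased_data_def)
  show ?thesis
  proof (cases "card (Bs!j \<inter> A) \<le> 1 \<or> pl j (r - 1) \<in> A")
    case True
    then show ?thesis using erased by (auto simp: unrecoverable_in_group_def)
  next
    case False
    then have "?E \<noteq> {}" using erased by auto
    then have "Max ?E \<in> ?E" using \<open>finite ?E\<close> by simp
    then show ?thesis
      using False erased \<open>finite ?E\<close> by (simp add: unrecoverable_in_group_def card_Diff_singleton)
  qed
qed

lemma card_unrecoverable_le_T_of:
  assumes placement: "\<forall>j < length Bs. bij_betw (pl j) {..<r} (Bs!j)" and r: "2 \<le> r"
  shows "card (unrecoverable r Bs pl A) \<le> T_of Bs A"
proof -
  have "card (unrecoverable r Bs pl A)
      \<le> (\<Sum>j<length Bs. card ((\<lambda>b. j * (r - 1) + b) ` unrecoverable_in_group r Bs pl A j))"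
    unfolding unrecoverable_def by (rule card_UN_le) simp
  also have "\<dots> \<le> (\<Sum>j<length Bs. card (unrecoverable_in_group r Bs pl A j))"
    by (intro sum_mono card_image_le finite_subset[OF unrecoverable_in_group_subset]) simp
  also have "\<dots> \<le> T_of Bs A"
    unfolding T_of_def
  proof (rule sum_mono)
    fix j assume "j \<in> {..<length Bs}"
    then show "card (unrecoverable_in_group r Bs pl A j)
        \<le> (if 2 \<le> card (Bs!j \<inter> A) then card (Bs!j \<inter> A) - 1 else 0)"
      using placement r by (intro card_unrecoverable_in_group) auto
  qed
  finally show ?thesis .
qed

lemma card_mat_kernel_Q_mat:
  assumes placement: "\<forall>j < length Bs. bij_betw (pl j) {..<r} (Bs!j)" and r: "2 \<le> r"
  shows "card (mat_kernel (Q_mat r Bs pl A :: 'a::{finite,field} mat)) \<le> CARD('a) ^ T_of Bs A"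
proof -
  have "card (mat_kernel (Q_mat r Bs pl A :: 'a mat)) \<le> CARD('a) ^ card (unrecoverable r Bs pl A)"
  proof (rule card_le_power_if_determined[OF finite_unrecoverable, where get = "($)"])
    fix v w :: "'a vec"
    assume v: "v \<in> mat_kernel (Q_mat r Bs pl A)" and w: "w \<in> mat_kernel (Q_mat r Bs pl A)"
      and agree: "\<forall>i\<in>unrecoverable r Bs pl A. v $ i = w $ i"
    have Q_eq: "Q_mat r Bs pl A *\<^sub>v v = Q_mat r Bs pl A *\<^sub>v w"
      using mat_kernelD(2)[OF Q_mat_carrier v] mat_kernelD(2)[OF Q_mat_carrier w] by simp
    show "v = w"
      by (rule Q_mat_mult_vec_determined[OF r mat_kernelD(1)[OF Q_mat_carrier v]
            mat_kernelD(1)[OF Q_mat_carrier w] Q_eq agree])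
  qed
  also have "\<dots> \<le> CARD('a) ^ T_of Bs A"
    using card_unrecoverable_le_T_of[OF placement r] by (rule power_increasing) simp
  finally show ?thesis .
qed

section \<open>Union bound over the sets of inaccessible disks\<close>

lemma T_of_le_T_max:
  assumes "A \<subseteq> {1..n}" "card A = n - k"
  shows "T_of Bs A \<le> T_max n k Bs"
proof -
  have "finite {T_of Bs A | A. A \<subseteq> {1..n} \<and> card A = n - k}"
    by (rule finite_subset[of _ "T_of Bs ` Pow {1..n}"]) auto
  then show ?thesis unfolding T_max_def using assms by (intro Max_ge) auto
qed

lemma card_low_rank_Q_mat_gen_mat:
  assumes placement: "\<forall>j < length Bs. bij_betw (pl j) {..<r} (Bs!j)"
    and T: "T_of Bs A \<le> T" and L: "(r - 1) * length Bs = M + T"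
  shows "CARD('a::{finite,field}) * card {S :: 'a mat. S \<in> carrier_mat T M \<and>
           vec_space.rank (r * length Bs) (Q_mat r Bs pl A * gen_mat ((r - 1) * length Bs) M S) < M}
         \<le> T * M * CARD('a) ^ (T * M)"
proof (cases "M = 0")
  case False
  then have "r - 1 \<noteq> 0" using L by auto
  then have r: "2 \<le> r" by simp
  have Q: "(Q_mat r Bs pl A :: 'a mat) \<in> carrier_mat (r * length Bs) (M + T)"
    using Q_mat_carrier[of r Bs pl A] unfolding L .
  have "card (mat_kernel (Q_mat r Bs pl A :: 'a mat)) \<le> CARD('a) ^ T_of Bs A"
    by (rule card_mat_kernel_Q_mat[OF placement r])
  also have "\<dots> \<le> CARD('a) ^ T" using T by (intro power_increasing) simp_all
  finally have kernel: "card (mat_kernel (Q_mat r Bs pl A :: 'a mat)) \<le> CARD('a) ^ T" .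
  show ?thesis
  proof (cases "T = 0")
    case True
    have "CARD('a) \<le> 1"
      if "S \<in> carrier_mat T M" "vec_space.rank (r * length Bs) (Q_mat r Bs pl A * gen_mat (M + T) M S) < M"
      for S :: "'a mat"
      using card_kernel_ge_if_low_rank[OF Q that] kernel True by simp
    then have no_bad: "{S :: 'a mat. S \<in> carrier_mat T M \<and>
        vec_space.rank (r * length Bs) (Q_mat r Bs pl A * gen_mat (M + T) M S) < M} = {}"
      using two_le_card_field[where 'a = 'a] by fastforce
    show ?thesis unfolding L no_bad by simp
  next
    case False
    have "CARD('a) * card {S :: 'a mat. S \<in> carrier_mat T M \<and>
           vec_space.rank (r * length Bs) (Q_mat r Bs pl A * gen_mat (M + T) M S) < M}
         \<le> M * CARD('a) ^ (T * M)"
      by (rule card_low_rank_systematic[OF Q kernel])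
    also have "\<dots> \<le> T * M * CARD('a) ^ (T * M)" using False by simp
    finally show ?thesis unfolding L .
  qed
qed simp

lemma card_low_rank_some_erasure:
  assumes kn: "k \<le> n" and placement: "\<forall>j < length Bs. bij_betw (pl j) {..<r} (Bs!j)"
  defines "T \<equiv> T_max n k Bs" and "M \<equiv> (r - 1) * length Bs - T_max n k Bs"
  shows "CARD('a::{finite,field}) * card {S :: 'a mat. S \<in> carrier_mat T M \<and>
           (\<exists>A. A \<subseteq> {1..n} \<and> card A = n - k \<and>
              vec_space.rank (r * length Bs) (Q_mat r Bs pl A * gen_mat ((r - 1) * length Bs) M S) < M)}
         \<le> (n choose k) * T * M * CARD('a) ^ (T * M)"
proof -
  let ?AA = "{A. A \<subseteq> {1..n} \<and> card A = n - k}"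
  let ?bad = "\<lambda>A. {S :: 'a mat. S \<in> carrier_mat T M \<and>
              vec_space.rank (r * length Bs) (Q_mat r Bs pl A * gen_mat ((r - 1) * length Bs) M S) < M}"
  have finite_AA: "finite ?AA" by (rule finite_subset[of _ "Pow {1..n}"]) auto
  have bad_A: "CARD('a) * card (?bad A) \<le> T * M * CARD('a) ^ (T * M)" if "A \<in> ?AA" for A
  proof (cases "M = 0")
    case False
    then have "(r - 1) * length Bs = M + T" unfolding M_def T_def by simp
    moreover have "T_of Bs A \<le> T" using that unfolding T_def by (intro T_of_le_T_max) auto
    ultimately show ?thesis by (intro card_low_rank_Q_mat_gen_mat[OF placement])
  qed simp
  have "CARD('a) * card (\<Union>A\<in>?AA. ?bad A) \<le> CARD('a) * (\<Sum>A\<in>?AA. card (?bad A))"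
    using card_UN_le[OF finite_AA] by (rule mult_le_mono2)
  also have "\<dots> \<le> (\<Sum>A\<in>?AA. T * M * CARD('a) ^ (T * M))"
    unfolding sum_distrib_left using bad_A by (rule sum_mono)
  also have "\<dots> = (n choose k) * T * M * CARD('a) ^ (T * M)"
    using n_subsets[of "{1..n}" "n - k"] binomial_symmetric[OF kn] by simp
  also have "(\<Union>A\<in>?AA. ?bad A) = {S :: 'a mat. S \<in> carrier_mat T M \<and>
           (\<exists>A. A \<subseteq> {1..n} \<and> card A = n - k \<and>
              vec_space.rank (r * length Bs) (Q_mat r Bs pl A * gen_mat ((r - 1) * length Bs) M S) < M)}"
    by blast
  finally show ?thesis .
qed

theorem mainTheorem4:
  fixes lam r n k :: nat and Bs :: "nat set list" and pl :: "nat \<Rightarrow> nat \<Rightarrow> nat"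
  assumes design: "is_bibd lam r n Bs"
    and kn: "k \<le> n"
    and placement: "\<forall>j < length Bs. bij_betw (pl j) {..<r} (Bs!j)"
  defines "N \<equiv> length Bs"
    and "T \<equiv> T_max n k Bs"
    and "M \<equiv> (r - 1) * length Bs - T_max n k Bs"
    and "q \<equiv> card (UNIV :: 'a set)"
  shows "real (card {S :: 'a::{finite,field} mat. S \<in> carrier_mat T M \<and>
            (\<exists>A. A \<subseteq> {1..n} \<and> card A = n - k \<and>
               vec_space.rank (r * N) (Q_mat r Bs pl A * gen_mat ((r - 1) * N) M S) < M)})
         \<le> (real (n choose k) * real T * real M / real q) * real q ^ (T * M)
       \<and> (real q > real (n choose k) * real T * real M \<longrightarrow>
           (\<exists>S :: 'a mat. S \<in> carrier_mat T M \<and>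
              (\<forall>A. A \<subseteq> {1..n} \<and> card A = n - k \<longrightarrow>
                 vec_space.rank (r * N) (Q_mat r Bs pl A * gen_mat ((r - 1) * N) M S) = M)))"
proof -
  let ?bad = "{S :: 'a mat. S \<in> carrier_mat T M \<and>
            (\<exists>A. A \<subseteq> {1..n} \<and> card A = n - k \<and>
               vec_space.rank (r * N) (Q_mat r Bs pl A * gen_mat ((r - 1) * N) M S) < M)}"
  have q: "0 < q" unfolding q_def by simp
  have count: "q * card ?bad \<le> (n choose k) * T * M * q ^ (T * M)"
    using card_low_rank_some_erasure[OF kn placement] unfolding q_def T_def M_def N_def .
  show ?thesis
  proof (intro conjI impI)
    have "real (card ?bad) * real q \<le> real (n choose k) * real T * real M * real q ^ (T * M)"
      using of_nat_mono[OF count] by (simp only: of_nat_mult of_nat_power mult.commute)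
    then have "real (card ?bad) \<le> real (n choose k) * real T * real M * real q ^ (T * M) / real q"
      using q by (simp add: pos_le_divide_eq)
    then show "real (card ?bad) \<le> (real (n choose k) * real T * real M / real q) * real q ^ (T * M)"
      by (simp only: times_divide_eq_left)
  next
    assume "real (n choose k) * real T * real M < real q"
    then have "(n choose k) * T * M < q" by (simp flip: of_nat_mult)
    with count obtain S where S: "S \<in> carrier_mat T M" "S \<notin> ?bad"
      unfolding q_def by (rule exists_carrier_mat_not_in) blast
    show "\<exists>S :: 'a mat. S \<in> carrier_mat T M \<and> (\<forall>A. A \<subseteq> {1..n} \<and> card A = n - k \<longrightarrow>
        vec_space.rank (r * N) (Q_mat r Bs pl A * gen_mat ((r - 1) * N) M S) = M)"
    proof (intro exI[of _ S] conjI allI impI)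
      fix A assume "A \<subseteq> {1..n} \<and> card A = n - k"
      moreover have "vec_space.rank (r * N) (Q_mat r Bs pl A * gen_mat ((r - 1) * N) M S) \<le> M"
        unfolding N_def by (intro vec_space.rank_le_nc mult_carrier_mat[OF Q_mat_carrier gen_mat_carrier])
      ultimately show "vec_space.rank (r * N) (Q_mat r Bs pl A * gen_mat ((r - 1) * N) M S) = M"
        using S by auto
    qed (rule S(1))
  qed
qed
end
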